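(* For any $f\in LC(O,K)$, any integers $m\ge0$, $n\ge0$, and any $x\in O$, $$\big((\Delta-[m]I)^nf\big)(x)=\sum_{i=0}^n\sum_{j=i}^n(-1)^{n-i}\binom{n}{j}[m]^{n-j}f(T^ix)\,\mathcal{D}_i(T^j).$$
   Context: Let $q$ be a prime power, $K=\mathbf{F}_q((T))$, $O=\mathbf{F}_q[[T]]$, and $LC(O,K)$ the space of continuous $\mathbf{F}_q$-linear functions $O\to K$. Put $[m]=T^{q^m}-T$ (so $[0]=0$). Hasse derivatives: $\mathcal{D}_n(\sum_ia_iT^i)=\sum_i\binom{i}{n}a_iT^{i-n}$ (binomials in $\mathbf{F}_q$). The Carlitz difference operator $\Delta$ on $LC(O,K)$ is $(\Delta f)(x)=f(Tx)-Tf(x)$, and $I$ is the identity operator; $\binom{n}{j}$ is read in $\mathbf{F}_q$. *)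

theory Defs
  imports "HOL-Computational_Algebra.Formal_Laurent_Series" "HOL-Library.Cardinality"
begin

(* K = F_q((T)) is modelled as 'a fls for a finite field 'a (q = CARD('a)); T = fls_X. *)

definition Oring :: "'a::field fls set" where
  "Oring = {x. fls_subdegree x \<ge> 0}"

definition tcont_on_O :: "('a::field fls \<Rightarrow> 'a fls) \<Rightarrow> bool" where
  "tcont_on_O f \<longleftrightarrow> (\<forall>x\<in>Oring. \<forall>N::int. \<exists>M::int. \<forall>y\<in>Oring.
      (y = x \<or> fls_subdegree (y - x) \<ge> M) \<longrightarrow> (f y = f x \<or> fls_subdegree (f y - f x) \<ge> N))"

(* LC(O,K): continuous F_q-linear functions O -> K (only values on O matter) *)
definition LC :: "('a::{field,finite} fls \<Rightarrow> 'a fls) set" where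
  "LC = {f. (\<forall>x\<in>Oring. \<forall>y\<in>Oring. f (x + y) = f x + f y)
          \<and> (\<forall>c::'a. \<forall>x\<in>Oring. f (fls_const c * x) = fls_const c * f x)
          \<and> tcont_on_O f}"

definition bracket :: "nat \<Rightarrow> 'a::{field,finite} fls" where
  "bracket m = fls_X ^ (CARD('a) ^ m) - fls_X"

definition Delta :: "('a::field fls \<Rightarrow> 'a fls) \<Rightarrow> ('a fls \<Rightarrow> 'a fls)" where
  "Delta f = (\<lambda>x. f (fls_X * x) - fls_X * f x)"

definition DeltaM :: "nat \<Rightarrow> ('a::{field,finite} fls \<Rightarrow> 'a fls) \<Rightarrow> ('a fls \<Rightarrow> 'a fls)" where
  "DeltaM m f = (\<lambda>x. Delta f x - bracket m * f x)"

definition int_binom :: "int \<Rightarrow> nat \<Rightarrow> int" where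
  "int_binom i n = (if i \<ge> 0 then int (nat i choose n)
                    else (-1) ^ n * int ((nat (- i) + n - 1) choose n))"

definition hasse :: "nat \<Rightarrow> 'a::ring_1 fls \<Rightarrow> 'a fls" where
  "hasse n f = fls_shift (int n) (Abs_fls (\<lambda>i. of_int (int_binom i n) * fls_nth f i))"

end

theory Submission
  imports Defs
begin

(* Write E for the shift (E f)(x) = f(T x). Then Delta - [m] I = E - (T + [m]) I, and E commutes
   with multiplication by the constant T + [m], so the binomial theorem gives
   ((Delta - [m] I)^n f)(x) = sum_i binom(n,i) (-(T + [m]))^(n-i) f(T^i x).
   Since D_i(T^j) = binom(j,i) T^(j-i) and binom(n,j) binom(j,i) = binom(n,i) binom(n-i,j-i),
   the inner sum over j in the claimed formula is binom(n,i) (T + [m])^(n-i), again by the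
   binomial theorem. *)

lemma binomial_sum_Suc:
  fixes c :: "'r::comm_semiring_1"
  shows "(\<Sum>i\<le>Suc n. of_nat (Suc n choose i) * c ^ (Suc n - i) * a i)
       = (\<Sum>i\<le>n. of_nat (n choose i) * c ^ (n - i) * (a (Suc i) + c * a i))"
proof -
  have shifted: "(\<Sum>i\<le>n. of_nat (n choose i) * c ^ (n - i) * (c * a i))
      = c ^ Suc n * a 0 + (\<Sum>i\<le>n. of_nat (n choose Suc i) * c ^ (n - i) * a (Suc i))"
  proof -
    have "(\<Sum>i\<le>n. of_nat (n choose i) * c ^ (n - i) * (c * a i))
        = (\<Sum>i\<le>Suc n. of_nat (n choose i) * c ^ (Suc n - i) * a i)"
      by (auto simp: Suc_diff_le binomial_eq_0 algebra_simps intro!: sum.cong)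
    also have "\<dots> = c ^ Suc n * a 0 + (\<Sum>i\<le>n. of_nat (n choose Suc i) * c ^ (n - i) * a (Suc i))"
      by (subst sum.atMost_Suc_shift) simp
    finally show ?thesis .
  qed
  have "(\<Sum>i\<le>Suc n. of_nat (Suc n choose i) * c ^ (Suc n - i) * a i)
      = c ^ Suc n * a 0 + (\<Sum>i\<le>n. of_nat (n choose i) * c ^ (n - i) * a (Suc i))
        + (\<Sum>i\<le>n. of_nat (n choose Suc i) * c ^ (n - i) * a (Suc i))"
    by (subst sum.atMost_Suc_shift) (simp add: sum.distrib algebra_simps)
  also have "\<dots> = (\<Sum>i\<le>n. of_nat (n choose i) * c ^ (n - i) * (a (Suc i) + c * a i))"
    unfolding distrib_left sum.distrib shifted by (simp add: ac_simps)
  finally show ?thesis .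
qed

lemma funpow_shift_minus_scalar:
  fixes c :: "'r::comm_ring_1" and s :: "'b \<Rightarrow> 'b"
  shows "(((\<lambda>g y. g (s y) - c * g y) ^^ n) f) x
       = (\<Sum>i\<le>n. of_nat (n choose i) * (- c) ^ (n - i) * f ((s ^^ i) x))"
proof (induction n arbitrary: f x)
  case 0
  then show ?case by simp
next
  case (Suc n)
  have "(((\<lambda>g y. g (s y) - c * g y) ^^ Suc n) f) x
      = (((\<lambda>g y. g (s y) - c * g y) ^^ n) (\<lambda>y. f (s y) - c * f y)) x"
    by (simp only: funpow_Suc_right comp_def)
  also have "\<dots> = (\<Sum>i\<le>n. of_nat (n choose i) * (- c) ^ (n - i)
                     * (f ((s ^^ Suc i) x) + (- c) * f ((s ^^ i) x)))"
    by (simp add: Suc.IH funpow_swap1)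
  also have "\<dots> = (\<Sum>i\<le>Suc n. of_nat (Suc n choose i) * (- c) ^ (Suc n - i) * f ((s ^^ i) x))"
    by (rule binomial_sum_Suc[symmetric])
  finally show ?case .
qed

lemma sum_choose_mult_choose_power:
  fixes x y :: "'r::comm_semiring_1"
  assumes "i \<le> n"
  shows "(\<Sum>j=i..n. of_nat (n choose j) * of_nat (j choose i) * x ^ (j - i) * y ^ (n - j))
       = of_nat (n choose i) * (x + y) ^ (n - i)"
proof -
  have "(\<Sum>j=i..n. of_nat (n choose j) * of_nat (j choose i) * x ^ (j - i) * y ^ (n - j))
      = (\<Sum>j=i..n. of_nat (n choose i) * (of_nat ((n - i) choose (j - i)) * x ^ (j - i) * y ^ (n - i - (j - i))))"
  proof (rule sum.cong[OF refl])
    fix j assume "j \<in> {i..n}"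
    then have "(n choose j) * (j choose i) = (n choose i) * ((n - i) choose (j - i))"
        and "n - j = n - i - (j - i)"
      using choose_mult[of i j n] by auto
    then show "of_nat (n choose j) * of_nat (j choose i) * x ^ (j - i) * y ^ (n - j)
        = of_nat (n choose i) * (of_nat ((n - i) choose (j - i)) * x ^ (j - i) * y ^ (n - i - (j - i)))"
      by (metis (no_types, lifting) mult.assoc of_nat_mult)
  qed
  also have "\<dots> = of_nat (n choose i) * (\<Sum>k\<le>n - i. of_nat ((n - i) choose k) * x ^ k * y ^ (n - i - k))"
    by (simp add: sum_distrib_left sum.atLeastAtMost_shift_0[OF assms] atLeast0AtMost)
  also have "\<dots> = of_nat (n choose i) * (x + y) ^ (n - i)"
    by (simp only: binomial_ring)
  finally show ?thesis .
qed

lemma hasse_X_power: "hasse i (fls_X ^ j :: 'a::ring_1 fls) = of_nat (j choose i) * fls_X ^ (j - i)"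
proof -
  have "(\<lambda>k. of_int (int_binom k i) * fls_nth (fls_X ^ j :: 'a fls) k)
      = fls_nth (fls_const (of_nat (j choose i)) * fls_X ^ j :: 'a fls)"
    by (rule ext) (simp add: int_binom_def)
  then show ?thesis
    by (cases "i \<le> j") (auto simp: hasse_def fls_nth_inverse fls_of_nat_nth binomial_eq_0 intro!: fls_eqI)
qed

lemma sum_choose_hasse_X_power:
  fixes b :: "'a::comm_ring_1 fls"
  assumes "i \<le> n"
  shows "(\<Sum>j=i..n. of_nat (n choose j) * b ^ (n - j) * hasse i (fls_X ^ j))
       = of_nat (n choose i) * (fls_X + b) ^ (n - i)"
  using sum_choose_mult_choose_power[OF assms, of fls_X b] by (simp add: hasse_X_power mult_ac)

lemma DeltaM_eq_shift_minus_scalar: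
  "DeltaM m = (\<lambda>g y. g (fls_X * y) - (fls_X + bracket m) * g y)"
  by (intro ext) (simp add: DeltaM_def Delta_def distrib_right diff_diff_eq)

theorem corollary9:
  fixes f :: "'a::{field,finite} fls \<Rightarrow> 'a fls" and m n :: nat and x :: "'a fls"
  assumes "f \<in> LC" and "x \<in> Oring"
  shows "((DeltaM m ^^ n) f) x =
    (\<Sum>i=0..n. \<Sum>j=i..n. (-1) ^ (n - i) * of_nat (n choose j) * bracket m ^ (n - j)
        * f (fls_X ^ i * x) * hasse i (fls_X ^ j))"
proof -
  have "((DeltaM m ^^ n) f) x
      = (\<Sum>i\<le>n. of_nat (n choose i) * (- (fls_X + bracket m)) ^ (n - i) * f (fls_X ^ i * x))"
    by (simp add: DeltaM_eq_shift_minus_scalar funpow_shift_minus_scalar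
        funpow_times_power[where f = "\<lambda>_. i" for i])
  also have "\<dots> = (\<Sum>i=0..n. (-1) ^ (n - i) * f (fls_X ^ i * x)
      * (\<Sum>j=i..n. of_nat (n choose j) * bracket m ^ (n - j) * hasse i (fls_X ^ j)))"
    unfolding atLeast0AtMost
    by (intro sum.cong refl, subst sum_choose_hasse_X_power)
      (simp_all only: power_minus[of "fls_X + bracket m"] mult_ac atMost_iff)
  also have "\<dots> = (\<Sum>i=0..n. \<Sum>j=i..n. (-1) ^ (n - i) * of_nat (n choose j) * bracket m ^ (n - j)
        * f (fls_X ^ i * x) * hasse i (fls_X ^ j))"
    by (simp only: sum_distrib_left mult_ac)
  finally show ?thesis .
qed

end
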